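(* Let $\mathbf{u}(\mathbf{x},t)$, $p(\mathbf{x},t)$, $\theta(\mathbf{x},t)$ be smooth solutions of the dimensionless incompressible, stratified, rotating Euler equations $$\frac{D\mathbf{u}}{Dt} + 2\boldsymbol{\Omega}\times\mathbf{u} + a_0\mathbf{k}\theta = -\nabla p,\qquad \operatorname{div}\mathbf{u}=0,\qquad \frac{D\theta}{Dt}=0,$$ where $\frac{D}{Dt}=\frac{\partial}{\partial t}+\mathbf{u}\cdot\nabla$, $\boldsymbol{\Omega}$ is the constant rotation vector, $\mathbf{k}$ the vertical unit vector and $a_0$ a constant. Let $q=(\boldsymbol{\omega}+2\boldsymbol{\Omega})\cdot\nabla\theta$ with $\boldsymbol{\omega}=\operatorname{curl}\mathbf{u}$, let $Q$ be a smooth function of one variable, and set $\boldsymbol{\mathcal{B}}=\nabla Q(q)\times\nabla\theta$, $\mathcal{B}=|\boldsymbol{\mathcal{B}}|$, $\hat{\boldsymbol{\mathcal{B}}}=\boldsymbol{\mathcal{B}}/\mathcal{B}$. Define $\mathbf{a}=\boldsymbol{\mathcal{B}}\cdot\nabla\mathbf{u}$ and $\mathbf{b}=\frac{D\mathbf{a}}{Dt}$ (which equals $-P\boldsymbol{\mathcal{B}}-\boldsymbol{\mathcal{B}}\cdot\nabla(2\boldsymbol{\Omega}\times\mathbf{u}+a_0\mathbf{k}\theta)$, where $P=(\partial^2 p/\partial x_i\partial x_j)$ is the pressure Hessian), and $$\boldsymbol{\chi}_a=\mathcal{B}^{-1}(\hat{\boldsymbol{\mathcal{B}}}\times\mathbf{a}),\qquad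 \boldsymbol{\chi}_b=\mathcal{B}^{-1}(\hat{\boldsymbol{\mathcal{B}}}\times\mathbf{b}),$$ with $\chi_a=|\boldsymbol{\chi}_a|$ and $\hat{\boldsymbol{\chi}}_a=\boldsymbol{\chi}_a/\chi_a$. Then, wherever $\mathcal{B}\neq0$ and $\chi_a\neq0$, the triple $\big(\hat{\boldsymbol{\mathcal{B}}},\,\hat{\boldsymbol{\chi}}_a,\,\hat{\boldsymbol{\mathcal{B}}}\times\hat{\boldsymbol{\chi}}_a\big)$ is an orthonormal frame whose Lagrangian time derivatives satisfy $$\frac{D\hat{\boldsymbol{\mathcal{B}}}}{Dt}=\mathbf{D}_a\times\hat{\boldsymbol{\mathcal{B}}},\qquad \frac{D(\hat{\boldsymbol{\mathcal{B}}}\times\hat{\boldsymbol{\chi}}_a)}{Dt}=\mathbf{D}_a\times(\hat{\boldsymbol{\mathcal{B}}}\times\hat{\boldsymbol{\chi}}_a),\qquad \frac{D\hat{\boldsymbol{\chi}}_a}{Dt}=\mathbf{D}_a\times\hat{\boldsymbol{\chi}}_a,$$ where the Darboux angular velocity vector is $$\mathbf{D}_a=\boldsymbol{\chi}_a+\frac{c_b}{\chi_a}\hat{\boldsymbol{\mathcal{B}}},\qquad c_b=\hat{\boldsymbol{\mathcal{B}}}\cdot(\hat{\boldsymbol{\chi}}_a\times\boldsymbol{\chi}_b).$$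
   Context: All fields are smooth functions of position $\mathbf{x}\in\mathbb{R}^3$ and time $t$. $\frac{D}{Dt}=\partial_t+\mathbf{u}\cdot\nabla$ is the Lagrangian (material) time derivative along the fluid flow. For vectors, $\boldsymbol{\mathcal{B}}\cdot\nabla\mathbf{u}$ denotes the vector with components $\sum_j\mathcal{B}_j\partial_j u_i$. In this setting $\boldsymbol{\mathcal{B}}$ satisfies $\frac{D\boldsymbol{\mathcal{B}}}{Dt}=\boldsymbol{\mathcal{B}}\cdot\nabla\mathbf{u}$ and $\operatorname{div}\boldsymbol{\mathcal{B}}=0$. *)

theory Defs
  imports "HOL-Analysis.Analysis" "HOL-Analysis.Cross3"
begin

text \<open>Smoothness (C-infinity): differentiable everywhere, and every directional
  derivative field is again smooth (coinductively, i.e. to all orders).\<close>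
coinductive smooth :: "('a::real_normed_vector \<Rightarrow> 'b::real_normed_vector) \<Rightarrow> bool" where
  "(\<forall>x. f differentiable (at x)) \<Longrightarrow> (\<forall>v. smooth (\<lambda>x. frechet_derivative f (at x) v))
    \<Longrightarrow> smooth f"

definition smooth_field :: "(real^3 \<Rightarrow> real \<Rightarrow> 'b::real_normed_vector) \<Rightarrow> bool" where
  "smooth_field f \<longleftrightarrow> smooth (\<lambda>z::(real^3) \<times> real. f (fst z) (snd z))"

definition pd :: "3 \<Rightarrow> (real^3 \<Rightarrow> real \<Rightarrow> 'b::real_normed_vector) \<Rightarrow> real^3 \<Rightarrow> real \<Rightarrow> 'b" where
  "pd j f x t = frechet_derivative (\<lambda>y. f y t) (at x) (axis j 1)"

definition pt :: "(real^3 \<Rightarrow> real \<Rightarrow> 'b::real_normed_vector) \<Rightarrow> real^3 \<Rightarrow> real \<Rightarrow> 'b" where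
  "pt f x t = frechet_derivative (\<lambda>s. f x s) (at t) 1"

definition matder :: "(real^3 \<Rightarrow> real \<Rightarrow> real^3) \<Rightarrow> (real^3 \<Rightarrow> real \<Rightarrow> 'b::real_normed_vector)
    \<Rightarrow> real^3 \<Rightarrow> real \<Rightarrow> 'b" where
  "matder u f x t = pt f x t + (\<Sum>j\<in>UNIV. (u x t $ j) *\<^sub>R pd j f x t)"

definition dirder :: "(real^3 \<Rightarrow> real \<Rightarrow> real^3) \<Rightarrow> (real^3 \<Rightarrow> real \<Rightarrow> 'b::real_normed_vector)
    \<Rightarrow> real^3 \<Rightarrow> real \<Rightarrow> 'b" where
  "dirder V f x t = (\<Sum>j\<in>UNIV. (V x t $ j) *\<^sub>R pd j f x t)"

definition grad :: "(real^3 \<Rightarrow> real \<Rightarrow> real) \<Rightarrow> real^3 \<Rightarrow> real \<Rightarrow> real^3" where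
  "grad f x t = (\<chi> j. pd j f x t)"

definition divg :: "(real^3 \<Rightarrow> real \<Rightarrow> real^3) \<Rightarrow> real^3 \<Rightarrow> real \<Rightarrow> real" where
  "divg v x t = (\<Sum>j\<in>UNIV. pd j (\<lambda>y s. v y s $ j) x t)"

definition curl :: "(real^3 \<Rightarrow> real \<Rightarrow> real^3) \<Rightarrow> real^3 \<Rightarrow> real \<Rightarrow> real^3" where
  "curl v x t = vector [
     pd 2 (\<lambda>y s. v y s $ 3) x t - pd 3 (\<lambda>y s. v y s $ 2) x t,
     pd 3 (\<lambda>y s. v y s $ 1) x t - pd 1 (\<lambda>y s. v y s $ 3) x t,
     pd 1 (\<lambda>y s. v y s $ 2) x t - pd 2 (\<lambda>y s. v y s $ 1) x t]"

definition hessian :: "(real^3 \<Rightarrow> real \<Rightarrow> real) \<Rightarrow> real^3 \<Rightarrow> real \<Rightarrow> real^3^3" where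
  "hessian p x t = (\<chi> i j. pd i (pd j p) x t)"

definition kvec :: "real^3" where "kvec = axis 3 1"

end

theory Submission
  imports Defs
begin

(*
  For the first, the material derivative commutes with spatial
  derivatives up to the velocity gradient, D(d_j f)/Dt = d_j (Df/Dt) - (d_j u).grad f.
  Contracting with B gives [D/Dt, B.grad] = (DB/Dt - B.grad u).grad, which vanishes because
  B is frozen into the flow. Hence b = D(B.grad u)/Dt = B.grad (Du/Dt), and the momentum
  equation turns this into -P B - B.grad (2 Omega x u + a0 k theta). Commuting the derivatives
  rests on the symmetry of second derivatives of smooth maps.

  For the frame, normalising B keeps only the part of a = DB/Dt normal to B, so that
  D(B^)/Dt = chi_a x B^. Differentiating chi_a = |B|^-2 B x a gives D(chi_a)/Dt = chi_b - k chi_a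
  with k = 2 (B.a)/|B|^2, and normalising keeps only the part of chi_b normal to chi_a, which
  rotates chi_a^ about B^ at the rate c_b/chi_a. Both unit vectors therefore rotate with the
  angular velocity D_a, and by the Jacobi identity so does their cross product.
*)

unbundle cross3_syntax

section \<open>Smooth maps\<close>

lemma smooth_imp_differentiable: "smooth f \<Longrightarrow> f differentiable (at x)"
  by (erule smooth.cases) auto

lemma smooth_has_derivative: "smooth f \<Longrightarrow> (f has_derivative frechet_derivative f (at x)) (at x)"
  using smooth_imp_differentiable frechet_derivative_works by blast

lemma smooth_frechet_derivative: "smooth f \<Longrightarrow> smooth (\<lambda>x. frechet_derivative f (at x) v)"
  by (erule smooth.cases) auto

lemma smooth_const: "smooth (\<lambda>x. c)"
proof -
  have "\<exists>c. f = (\<lambda>x. c) \<Longrightarrow> smooth f" for f :: "'a::real_normed_vector \<Rightarrow> 'b::real_normed_vector"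
  proof (coinduction arbitrary: f)
    case smooth
    then obtain c where f: "f = (\<lambda>x. c)" by blast
    have "frechet_derivative f (at x) = (\<lambda>h. 0)" for x
      unfolding f by (rule frechet_derivative_at[symmetric]) (rule has_derivative_const)
    then show ?case using f by (auto intro: differentiableI has_derivative_const)
  qed
  then show ?thesis by blast
qed

lemma smooth_bounded_linear:
  assumes L: "bounded_linear L" and f: "smooth f"
  shows "smooth (\<lambda>x. L (f x))"
proof -
  have "\<exists>f. smooth f \<and> h = (\<lambda>x. L (f x)) \<Longrightarrow> smooth h" for h
  proof (coinduction arbitrary: h)
    case smooth
    then obtain f where f: "smooth f" and h: "h = (\<lambda>x. L (f x))" by blast
    have D: "((\<lambda>x. L (f x)) has_derivative (\<lambda>v. L (frechet_derivative f (at x) v))) (at x)" for x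
      by (rule bounded_linear.has_derivative[OF L smooth_has_derivative[OF f]])
    then have d: "frechet_derivative (\<lambda>x. L (f x)) (at x) = (\<lambda>v. L (frechet_derivative f (at x) v))"
      for x by (rule frechet_derivative_at[symmetric])
    have "\<forall>v. \<exists>f'. smooth f' \<and> (\<lambda>x. frechet_derivative h (at x) v) = (\<lambda>x. L (f' x))"
      unfolding h d using smooth_frechet_derivative[OF f] by blast
    moreover have "\<forall>x. h differentiable at x" unfolding h using D by (blast intro: differentiableI)
    ultimately show ?case by blast
  qed
  with f show ?thesis by blast
qed

lemma smooth_add:
  assumes f: "smooth f" and g: "smooth g"
  shows "smooth (\<lambda>x. f x + g x)"
proof -
  have "\<exists>f g. smooth f \<and> smooth g \<and> h = (\<lambda>x. f x + g x) \<Longrightarrow> smooth h" for h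
  proof (coinduction arbitrary: h)
    case smooth
    then obtain f g where f: "smooth f" and g: "smooth g" and h: "h = (\<lambda>x. f x + g x)" by blast
    have D: "((\<lambda>x. f x + g x) has_derivative
        (\<lambda>v. frechet_derivative f (at x) v + frechet_derivative g (at x) v)) (at x)" for x
      by (rule has_derivative_add[OF smooth_has_derivative[OF f] smooth_has_derivative[OF g]])
    then have d: "frechet_derivative (\<lambda>x. f x + g x) (at x)
        = (\<lambda>v. frechet_derivative f (at x) v + frechet_derivative g (at x) v)" for x
      by (rule frechet_derivative_at[symmetric])
    have "\<forall>v. \<exists>f' g'. smooth f' \<and> smooth g'
        \<and> (\<lambda>x. frechet_derivative h (at x) v) = (\<lambda>x. f' x + g' x)"
      unfolding h d using smooth_frechet_derivative[OF f] smooth_frechet_derivative[OF g] by blast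
    moreover have "\<forall>x. h differentiable at x" unfolding h using D by (blast intro: differentiableI)
    ultimately show ?case by blast
  qed
  with f g show ?thesis by blast
qed

text \<open>Smoothness is coinductive, and the derivative of a product of smooth maps (or of a
  term g (q z) * k z) is a sum of such terms; so the coinductions below run over the closure
  of these terms under sums.\<close>

inductive sum_of_products ::
    "('b::real_normed_vector \<Rightarrow> 'c::real_normed_vector \<Rightarrow> 'd::real_normed_vector)
      \<Rightarrow> ('a::real_normed_vector \<Rightarrow> 'd) \<Rightarrow> bool" for pr where
  product: "smooth f \<Longrightarrow> smooth g \<Longrightarrow> sum_of_products pr (\<lambda>z. pr (f z) (g z))"
| sum: "sum_of_products pr h1 \<Longrightarrow> sum_of_products pr h2 \<Longrightarrow> sum_of_products pr (\<lambda>z. h1 z + h2 z)"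

lemma sum_of_products_derivative:
  assumes pr: "bounded_bilinear pr" and h: "sum_of_products pr h"
  shows "(h has_derivative frechet_derivative h (at x)) (at x)
    \<and> (\<forall>v. sum_of_products pr (\<lambda>z. frechet_derivative h (at z) v))"
  using h
proof (induction arbitrary: x)
  case (product f g)
  have D: "((\<lambda>z. pr (f z) (g z)) has_derivative (\<lambda>v. pr (f x) (frechet_derivative g (at x) v)
      + pr (frechet_derivative f (at x) v) (g x))) (at x)" for x
    by (rule bounded_bilinear.FDERIV[OF pr smooth_has_derivative smooth_has_derivative])
      (use product in auto)
  have "frechet_derivative (\<lambda>z. pr (f z) (g z)) (at x)
      = (\<lambda>v. pr (f x) (frechet_derivative g (at x) v) + pr (frechet_derivative f (at x) v) (g x))" for x
    by (rule frechet_derivative_at[symmetric]) (rule D)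
  then show ?case using D
    by (auto intro!: sum_of_products.intros smooth_frechet_derivative product)
next
  case (sum h1 h2)
  have "frechet_derivative (\<lambda>z. h1 z + h2 z) (at x)
      = (\<lambda>v. frechet_derivative h1 (at x) v + frechet_derivative h2 (at x) v)" for x
    by (rule frechet_derivative_at[symmetric]) (rule has_derivative_add; use sum in blast)
  then show ?case using sum by (auto intro!: sum_of_products.intros has_derivative_add)
qed

lemma smooth_bounded_bilinear:
  assumes pr: "bounded_bilinear pr" and f: "smooth f" and g: "smooth g"
  shows "smooth (\<lambda>x. pr (f x) (g x))"
proof -
  have "sum_of_products pr h \<Longrightarrow> smooth h" for h
  proof (coinduction arbitrary: h)
    case smooth
    then show ?case using sum_of_products_derivative[OF pr smooth] by (auto intro: differentiableI)
  qed
  then show ?thesis using sum_of_products.product[OF f g] by blast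
qed

lemma bounded_linear_real_eq_mult: "bounded_linear f \<Longrightarrow> f (s::real) = s * (f 1 :: real)"
proof -
  assume "bounded_linear f"
  then interpret bounded_linear f .
  show ?thesis using scale[of s 1] by simp
qed

inductive sum_of_compositions :: "('a::real_normed_vector \<Rightarrow> real) \<Rightarrow> ('a \<Rightarrow> real) \<Rightarrow> bool"
  for q where
  composition: "smooth (g :: real \<Rightarrow> real) \<Longrightarrow> smooth k \<Longrightarrow> sum_of_compositions q (\<lambda>z. g (q z) * k z)"
| sum: "sum_of_compositions q h1 \<Longrightarrow> sum_of_compositions q h2
    \<Longrightarrow> sum_of_compositions q (\<lambda>z. h1 z + h2 z)"

lemma sum_of_compositions_derivative:
  assumes q: "smooth q" and h: "sum_of_compositions q h"
  shows "(h has_derivative frechet_derivative h (at x)) (at x)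
    \<and> (\<forall>v. sum_of_compositions q (\<lambda>z. frechet_derivative h (at z) v))"
  using h
proof (induction arbitrary: x)
  case (composition g k)
  define g' where "g' = (\<lambda>w. frechet_derivative g (at w) 1)"
  have g_lin: "frechet_derivative g (at w) s = s * g' w" for w s
    unfolding g'_def
    by (rule bounded_linear_real_eq_mult, rule has_derivative_bounded_linear,
        rule smooth_has_derivative[OF composition(1)])
  have gq: "((\<lambda>z. g (q z)) has_derivative (\<lambda>v. frechet_derivative q (at x) v * g' (q x))) (at x)"
    for x
    using diff_chain_at[OF smooth_has_derivative[OF q] smooth_has_derivative[OF composition(1)]]
    by (simp add: o_def g_lin)
  have D: "((\<lambda>z. g (q z) * k z) has_derivative (\<lambda>v. g (q x) * frechet_derivative k (at x) v
      + g' (q x) * (frechet_derivative q (at x) v * k x))) (at x)" for x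
    using has_derivative_mult[OF gq smooth_has_derivative[OF composition(2)]]
    by (simp add: algebra_simps)
  have d: "frechet_derivative (\<lambda>z. g (q z) * k z) (at x) = (\<lambda>v. g (q x) * frechet_derivative k (at x) v
      + g' (q x) * (frechet_derivative q (at x) v * k x))" for x
    by (rule frechet_derivative_at[symmetric]) (rule D)
  have "smooth g'" unfolding g'_def by (rule smooth_frechet_derivative[OF composition(1)])
  moreover have "smooth (\<lambda>x. frechet_derivative q (at x) v * k x)" for v
    by (rule smooth_bounded_bilinear[OF bounded_bilinear_mult smooth_frechet_derivative[OF q]
          composition(2)])
  ultimately have "sum_of_compositions q (\<lambda>z. frechet_derivative (\<lambda>z. g (q z) * k z) (at z) v)" for v
    unfolding d
    by (intro sum_of_compositions.intros smooth_frechet_derivative composition)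
  then show ?case using D d by metis
next
  case (sum h1 h2)
  have "frechet_derivative (\<lambda>z. h1 z + h2 z) (at x)
      = (\<lambda>v. frechet_derivative h1 (at x) v + frechet_derivative h2 (at x) v)" for x
    by (rule frechet_derivative_at[symmetric]) (rule has_derivative_add; use sum in blast)
  then show ?case using sum by (auto intro!: sum_of_compositions.intros has_derivative_add)
qed

lemma smooth_compose_real:
  assumes g: "smooth (g :: real \<Rightarrow> real)" and q: "smooth q"
  shows "smooth (\<lambda>x. g (q x))"
proof -
  have "sum_of_compositions q h \<Longrightarrow> smooth h" for h
  proof (coinduction arbitrary: h)
    case smooth
    then show ?case using sum_of_compositions_derivative[OF q smooth] by (auto intro: differentiableI)
  qed
  then show ?thesis using sum_of_compositions.composition[OF g smooth_const, of q 1] by simp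
qed

section \<open>Symmetry of second derivatives\<close>

lemma increment_bound_affine:
  fixes f :: "real \<Rightarrow> 'b::real_normed_vector"
  assumes h: "0 \<le> h"
    and f': "\<And>r. r \<in> {0..h} \<Longrightarrow> (f has_vector_derivative f' r) (at r within {0..h})"
    and bound: "\<And>r. r \<in> {0..h} \<Longrightarrow> norm (f' r - C) \<le> B"
  shows "norm (f h - f 0 - h *\<^sub>R C) \<le> h * B"
proof -
  have "((\<lambda>r. f r - r *\<^sub>R C) has_derivative (\<lambda>k. k *\<^sub>R (f' r - C))) (at r within {0..h})"
    if "r \<in> {0..h}" for r
    using f'[OF that] unfolding has_vector_derivative_def
    by (auto intro!: derivative_eq_intros simp: algebra_simps)
  moreover have "onorm (\<lambda>k::real. k *\<^sub>R (f' r - C)) \<le> B" if "r \<in> {0..h}" for r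
  proof (rule onorm_le)
    fix k :: real
    have "\<bar>k\<bar> * norm (f' r - C) \<le> \<bar>k\<bar> * B" using bound[OF that] by (simp add: mult_left_mono)
    then show "norm (k *\<^sub>R (f' r - C)) \<le> B * norm k" by (simp add: mult.commute)
  qed
  ultimately have "norm ((f h - h *\<^sub>R C) - (f 0 - 0 *\<^sub>R C)) \<le> B * norm (h - 0)"
    by (intro differentiable_bound[OF convex_real_interval(5)]) (use h in auto)
  then show ?thesis using h by (simp add: algebra_simps)
qed

lemma has_vector_derivative_along_line:
  assumes "(G has_derivative G') (at (c + r *\<^sub>R w))"
  shows "((\<lambda>r. G (c + r *\<^sub>R w)) has_vector_derivative G' w) (at r within S)"
proof -
  have "((\<lambda>r. c + r *\<^sub>R w) has_derivative (\<lambda>k. k *\<^sub>R w)) (at r within S)"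
    by (auto intro!: derivative_eq_intros)
  from has_derivative_compose[OF this assms] show ?thesis
    unfolding has_vector_derivative_def by (simp add: linear_cmul[OF has_derivative_linear[OF assms]])
qed

lemma second_difference_estimate:
  fixes F :: "'a::real_normed_vector \<Rightarrow> 'b::real_normed_vector"
  assumes F: "smooth F"
    and close: "\<And>z. norm (z - z0) < \<delta> \<Longrightarrow>
       norm (frechet_derivative (\<lambda>z. frechet_derivative F (at z) v) (at z) w - H0) \<le> \<epsilon>"
    and h: "0 < h" "h * (norm v + norm w) < \<delta>"
  shows "norm (F (z0 + h *\<^sub>R w + h *\<^sub>R v) - F (z0 + h *\<^sub>R v) - F (z0 + h *\<^sub>R w) + F z0
           - h *\<^sub>R h *\<^sub>R H0) \<le> h * (h * \<epsilon>)"
proof -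
  define G where "G = (\<lambda>z. frechet_derivative F (at z) v)"
  have G: "smooth G" unfolding G_def by (rule smooth_frechet_derivative[OF F])
  have inner: "norm (G (z0 + s *\<^sub>R v + h *\<^sub>R w) - G (z0 + s *\<^sub>R v) - h *\<^sub>R H0) \<le> h * \<epsilon>"
    if s: "s \<in> {0..h}" for s
  proof -
    have "norm (G (z0 + s *\<^sub>R v + h *\<^sub>R w) - G (z0 + s *\<^sub>R v + 0 *\<^sub>R w) - h *\<^sub>R H0) \<le> h * \<epsilon>"
    proof (rule increment_bound_affine[where f = "\<lambda>r. G (z0 + s *\<^sub>R v + r *\<^sub>R w)"])
      show "0 \<le> h" using h by simp
      show "((\<lambda>r. G (z0 + s *\<^sub>R v + r *\<^sub>R w)) has_vector_derivative
              frechet_derivative G (at (z0 + s *\<^sub>R v + r *\<^sub>R w)) w) (at r within {0..h})" for r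
        by (rule has_vector_derivative_along_line[OF smooth_has_derivative[OF G]])
      show "norm (frechet_derivative G (at (z0 + s *\<^sub>R v + r *\<^sub>R w)) w - H0) \<le> \<epsilon>"
        if r: "r \<in> {0..h}" for r
      proof (unfold G_def, rule close)
        have "norm (z0 + s *\<^sub>R v + r *\<^sub>R w - z0) \<le> s * norm v + r * norm w"
          using s r norm_triangle_ineq[of "s *\<^sub>R v" "r *\<^sub>R w"] by (simp add: add.assoc)
        also have "\<dots> \<le> h * (norm v + norm w)"
          using s r by (simp add: distrib_left add_mono mult_right_mono)
        finally show "norm (z0 + s *\<^sub>R v + r *\<^sub>R w - z0) < \<delta>" using h by simp
      qed
    qed
    then show ?thesis by simp
  qed
  have "norm ((F (z0 + h *\<^sub>R w + h *\<^sub>R v) - F (z0 + h *\<^sub>R v))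
      - (F (z0 + h *\<^sub>R w + 0 *\<^sub>R v) - F (z0 + 0 *\<^sub>R v)) - h *\<^sub>R (h *\<^sub>R H0)) \<le> h * (h * \<epsilon>)"
  proof (rule increment_bound_affine[where f = "\<lambda>s. F (z0 + h *\<^sub>R w + s *\<^sub>R v) - F (z0 + s *\<^sub>R v)"])
    show "0 \<le> h" using h by simp
    show "((\<lambda>s. F (z0 + h *\<^sub>R w + s *\<^sub>R v) - F (z0 + s *\<^sub>R v)) has_vector_derivative
            G (z0 + h *\<^sub>R w + r *\<^sub>R v) - G (z0 + r *\<^sub>R v)) (at r within {0..h})" for r
      unfolding G_def
      by (rule has_vector_derivative_diff; rule has_vector_derivative_along_line[OF smooth_has_derivative[OF F]])
    show "norm (G (z0 + h *\<^sub>R w + r *\<^sub>R v) - G (z0 + r *\<^sub>R v) - h *\<^sub>R H0) \<le> h * \<epsilon>"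
      if "r \<in> {0..h}" for r
      using inner[OF that] by (simp add: algebra_simps)
  qed
  then show ?thesis by (simp add: algebra_simps)
qed

lemma frechet_derivative_commute:
  fixes F :: "'a::real_normed_vector \<Rightarrow> 'b::real_normed_vector"
  assumes F: "smooth F"
  shows "frechet_derivative (\<lambda>z. frechet_derivative F (at z) v) (at z0) w
       = frechet_derivative (\<lambda>z. frechet_derivative F (at z) w) (at z0) v"
proof -
  define H where "H v w z = frechet_derivative (\<lambda>z. frechet_derivative F (at z) v) (at z) w" for v w z
  have cont: "continuous (at z0) (H v w)" for v w
    unfolding H_def
    by (intro differentiable_imp_continuous_within smooth_imp_differentiable
        smooth_frechet_derivative F)
  have close: "norm (H v w z0 - H w v z0) \<le> 2 * e" if e: "e > 0" for e
  proof -
    obtain d1 where d1: "d1 > 0" "\<And>z. dist z z0 < d1 \<Longrightarrow> dist (H v w z) (H v w z0) < e"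
      using cont e unfolding continuous_at_eps_delta by blast
    obtain d2 where d2: "d2 > 0" "\<And>z. dist z z0 < d2 \<Longrightarrow> dist (H w v z) (H w v z0) < e"
      using cont e unfolding continuous_at_eps_delta by blast
    define h where "h = min d1 d2 / (2 * (norm v + norm w + 1))"
    have h: "h > 0" "h * (norm v + norm w) < min d1 d2"
    proof -
      have n: "norm v + norm w + 1 > 0" by (simp add: add_nonneg_pos)
      show "h > 0" unfolding h_def using d1 d2 n by simp
      have "h * (norm v + norm w) \<le> h * (norm v + norm w + 1)" using \<open>h > 0\<close> by simp
      also have "\<dots> = min d1 d2 / 2" unfolding h_def using n by (simp add: field_simps)
      finally show "h * (norm v + norm w) < min d1 d2" using d1 d2 by simp
    qed
    define \<Delta> where "\<Delta> = F (z0 + h *\<^sub>R w + h *\<^sub>R v) - F (z0 + h *\<^sub>R v) - F (z0 + h *\<^sub>R w) + F z0"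
    have "norm (\<Delta> - (h * h) *\<^sub>R H v w z0) \<le> h * (h * e)"
      using second_difference_estimate[OF F _ h(1), of z0 "min d1 d2" v w "H v w z0" e] h(2) d1(2)
      by (fastforce simp: \<Delta>_def H_def dist_norm)
    moreover have "norm (\<Delta> - (h * h) *\<^sub>R H w v z0) \<le> h * (h * e)"
      using second_difference_estimate[OF F _ h(1), of z0 "min d1 d2" w v "H w v z0" e] h(2) d2(2)
      by (fastforce simp: \<Delta>_def H_def dist_norm algebra_simps)
    ultimately have "(h * h) * norm (H v w z0 - H w v z0) \<le> (h * h) * (2 * e)"
      using norm_triangle_ineq4[of "\<Delta> - (h * h) *\<^sub>R H w v z0" "\<Delta> - (h * h) *\<^sub>R H v w z0"]
      by (simp add: algebra_simps flip: scaleR_diff_right)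
    then show ?thesis using h(1) by simp
  qed
  show ?thesis
  proof (rule ccontr)
    assume "\<not> ?thesis"
    then have "norm (H v w z0 - H w v z0) > 0" by (simp add: H_def)
    with close[of "norm (H v w z0 - H w v z0) / 4"] show False by simp
  qed
qed

section \<open>Derivatives of space-time fields\<close>

lemma smooth_field_iff: "smooth_field f \<longleftrightarrow> smooth (case_prod f)"
  by (simp add: smooth_field_def case_prod_unfold)

lemma smooth_field_differentiable: "smooth_field f \<Longrightarrow> case_prod f differentiable (at z)"
  by (simp add: smooth_field_iff smooth_imp_differentiable)

text \<open>At a point where a field is differentiable, pd j, pt, dirder V and matder u are its
  derivatives along the space-time directions (e_j, 0), (0, 1), (V, 0) and (u, 1); the
  calculus rules are therefore proved once, for the derivative along an arbitrary direction.\<close>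

definition spacetime_deriv ::
    "(real^3) \<times> real \<Rightarrow> (real^3 \<Rightarrow> real \<Rightarrow> 'b::real_normed_vector) \<Rightarrow> real^3 \<Rightarrow> real \<Rightarrow> 'b" where
  "spacetime_deriv W f x t = frechet_derivative (case_prod f) (at (x, t)) W"

lemma has_derivative_spacetime_deriv:
  "case_prod f differentiable (at (x, t)) \<Longrightarrow>
    (case_prod f has_derivative (\<lambda>W. spacetime_deriv W f x t)) (at (x, t))"
  unfolding spacetime_deriv_def by (rule frechet_derivative_works[THEN iffD1])

lemma pd_has_derivative:
  assumes "(case_prod f has_derivative D) (at (x, t))"
  shows "pd j f x t = D (axis j 1, 0)"
proof -
  have "((\<lambda>y. (y, t)) has_derivative (\<lambda>h. (h, 0))) (at x)"
    by (auto intro!: derivative_eq_intros)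
  from has_derivative_compose[OF this assms] have "((\<lambda>y. f y t) has_derivative (\<lambda>h. D (h, 0))) (at x)"
    by simp
  from frechet_derivative_at[OF this, symmetric] show ?thesis by (simp add: pd_def)
qed

lemma pt_has_derivative:
  assumes "(case_prod f has_derivative D) (at (x, t))"
  shows "pt f x t = D (0, 1)"
proof -
  have "((\<lambda>s. (x, s)) has_derivative (\<lambda>h. (0, h))) (at t)"
    by (auto intro!: derivative_eq_intros)
  from has_derivative_compose[OF this assms] have "((\<lambda>s. f x s) has_derivative (\<lambda>h. D (0, h))) (at t)"
    by simp
  from frechet_derivative_at[OF this, symmetric] show ?thesis by (simp add: pt_def)
qed

lemma dirder_has_derivative:
  assumes D: "(case_prod f has_derivative D) (at (x, t))"
  shows "dirder V f x t = D (V x t, 0)"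
proof -
  interpret linear D using has_derivative_linear[OF D] .
  have "(V x t, 0) = (\<Sum>j\<in>UNIV. (V x t $ j) *\<^sub>R (axis j 1, 0 :: real))"
    using basis_expansion[of "V x t"] by (simp add: sum_prod scalar_mult_eq_scaleR)
  moreover have "D (c *\<^sub>R v, 0) = c *\<^sub>R D (v, 0)" for c v
    using scale[of c "(v, 0)"] by simp
  ultimately have "D (V x t, 0) = (\<Sum>j\<in>UNIV. (V x t $ j) *\<^sub>R D (axis j 1, 0))"
    by (simp add: sum)
  then show ?thesis by (simp add: dirder_def pd_has_derivative[OF D])
qed

lemma matder_eq_pt_plus_dirder: "matder u f x t = pt f x t + dirder u f x t"
  by (simp add: matder_def dirder_def)

lemma matder_has_derivative:
  assumes D: "(case_prod f has_derivative D) (at (x, t))"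
  shows "matder u f x t = D (u x t, 1)"
proof -
  interpret linear D using has_derivative_linear[OF D] .
  show ?thesis
    using add[of "(0, 1)" "(u x t, 0)"]
    by (simp add: matder_eq_pt_plus_dirder pt_has_derivative[OF D] dirder_has_derivative[OF D])
qed

lemma pd_eq_spacetime_deriv:
  "case_prod f differentiable (at (x, t)) \<Longrightarrow> pd j f x t = spacetime_deriv (axis j 1, 0) f x t"
  by (rule pd_has_derivative[OF has_derivative_spacetime_deriv])

lemma pt_eq_spacetime_deriv:
  "case_prod f differentiable (at (x, t)) \<Longrightarrow> pt f x t = spacetime_deriv (0, 1) f x t"
  by (rule pt_has_derivative[OF has_derivative_spacetime_deriv])

lemma dirder_eq_spacetime_deriv:
  "case_prod f differentiable (at (x, t)) \<Longrightarrow> dirder V f x t = spacetime_deriv (V x t, 0) f x t"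
  by (rule dirder_has_derivative[OF has_derivative_spacetime_deriv])

lemma matder_eq_spacetime_deriv:
  "case_prod f differentiable (at (x, t)) \<Longrightarrow> matder u f x t = spacetime_deriv (u x t, 1) f x t"
  by (rule matder_has_derivative[OF has_derivative_spacetime_deriv])

lemma has_derivative_field_add:
  assumes "case_prod f differentiable (at (x, t))" and "case_prod g differentiable (at (x, t))"
  shows "(case_prod (\<lambda>y s. f y s + g y s) has_derivative
      (\<lambda>W. spacetime_deriv W f x t + spacetime_deriv W g x t)) (at (x, t))"
  using has_derivative_add[OF assms[THEN has_derivative_spacetime_deriv]]
  by (simp add: case_prod_unfold)

lemma has_derivative_field_sum:
  assumes "\<And>i. i \<in> I \<Longrightarrow> case_prod (g i) differentiable (at (x, t))"
  shows "(case_prod (\<lambda>y s. \<Sum>i\<in>I. g i y s) has_derivative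
      (\<lambda>W. \<Sum>i\<in>I. spacetime_deriv W (g i) x t)) (at (x, t))"
  using has_derivative_sum[OF assms[THEN has_derivative_spacetime_deriv]]
  by (simp add: case_prod_unfold)

lemma has_derivative_field_linear:
  assumes "bounded_linear L" and "case_prod f differentiable (at (x, t))"
  shows "(case_prod (\<lambda>y s. L (f y s)) has_derivative (\<lambda>W. L (spacetime_deriv W f x t))) (at (x, t))"
  using bounded_linear.has_derivative[OF assms(1) has_derivative_spacetime_deriv[OF assms(2)]]
  by (simp add: case_prod_unfold)

lemma has_derivative_field_bilinear:
  assumes "bounded_bilinear pr"
    and "case_prod f differentiable (at (x, t))" and "case_prod g differentiable (at (x, t))"
  shows "(case_prod (\<lambda>y s. pr (f y s) (g y s)) has_derivative
      (\<lambda>W. pr (f x t) (spacetime_deriv W g x t) + pr (spacetime_deriv W f x t) (g x t))) (at (x, t))"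
  using bounded_bilinear.FDERIV[OF assms(1) assms(2,3)[THEN has_derivative_spacetime_deriv]]
  by (simp add: case_prod_unfold)

lemma differentiable_field_bilinear:
  fixes f :: "real^3 \<Rightarrow> real \<Rightarrow> 'a::real_normed_vector"
    and g :: "real^3 \<Rightarrow> real \<Rightarrow> 'b::real_normed_vector"
  assumes "bounded_bilinear pr"
    and "case_prod f differentiable (at (x, t))" and "case_prod g differentiable (at (x, t))"
  shows "case_prod (\<lambda>y s. pr (f y s) (g y s)) differentiable (at (x, t))"
  by (rule differentiableI[OF has_derivative_field_bilinear[OF assms]])

lemma pd_add:
  assumes "case_prod f differentiable (at (x, t))" and "case_prod g differentiable (at (x, t))"
  shows "pd j (\<lambda>y s. f y s + g y s) x t = pd j f x t + pd j g x t"
  using pd_has_derivative[OF has_derivative_field_add[OF assms]]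
  by (simp add: assms pd_eq_spacetime_deriv)

lemma pd_sum:
  assumes "\<And>i. i \<in> I \<Longrightarrow> case_prod (g i) differentiable (at (x, t))"
  shows "pd j (\<lambda>y s. \<Sum>i\<in>I. g i y s) x t = (\<Sum>i\<in>I. pd j (g i) x t)"
  using pd_has_derivative[OF has_derivative_field_sum[OF assms]]
  by (simp add: assms pd_eq_spacetime_deriv)

lemma pd_linear:
  assumes "bounded_linear L" and "case_prod f differentiable (at (x, t))"
  shows "pd j (\<lambda>y s. L (f y s)) x t = L (pd j f x t)"
  using pd_has_derivative[OF has_derivative_field_linear[OF assms]]
  by (simp add: assms pd_eq_spacetime_deriv)

lemma pd_bilinear:
  assumes "bounded_bilinear pr"
    and "case_prod f differentiable (at (x, t))" and "case_prod g differentiable (at (x, t))"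
  shows "pd j (\<lambda>y s. pr (f y s) (g y s)) x t = pr (f x t) (pd j g x t) + pr (pd j f x t) (g x t)"
  using pd_has_derivative[OF has_derivative_field_bilinear[OF assms]]
  by (simp add: assms pd_eq_spacetime_deriv)

lemma matder_sum:
  assumes "\<And>i. i \<in> I \<Longrightarrow> case_prod (g i) differentiable (at (x, t))"
  shows "matder u (\<lambda>y s. \<Sum>i\<in>I. g i y s) x t = (\<Sum>i\<in>I. matder u (g i) x t)"
  using matder_has_derivative[OF has_derivative_field_sum[OF assms]]
  by (simp add: assms matder_eq_spacetime_deriv)

lemma matder_linear:
  assumes "bounded_linear L" and "case_prod f differentiable (at (x, t))"
  shows "matder u (\<lambda>y s. L (f y s)) x t = L (matder u f x t)"
  using matder_has_derivative[OF has_derivative_field_linear[OF assms]]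
  by (simp add: assms matder_eq_spacetime_deriv)

lemma matder_bilinear:
  assumes "bounded_bilinear pr"
    and "case_prod f differentiable (at (x, t))" and "case_prod g differentiable (at (x, t))"
  shows "matder u (\<lambda>y s. pr (f y s) (g y s)) x t
    = pr (f x t) (matder u g x t) + pr (matder u f x t) (g x t)"
  using matder_has_derivative[OF has_derivative_field_bilinear[OF assms]]
  by (simp add: assms matder_eq_spacetime_deriv)

lemma dirder_diff:
  assumes "case_prod f differentiable (at (x, t))" and "case_prod g differentiable (at (x, t))"
  shows "dirder V (\<lambda>y s. f y s - g y s) x t = dirder V f x t - dirder V g x t"
proof -
  have "(case_prod (\<lambda>y s. f y s - g y s) has_derivative
      (\<lambda>W. spacetime_deriv W f x t - spacetime_deriv W g x t)) (at (x, t))"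
    using has_derivative_diff[OF assms[THEN has_derivative_spacetime_deriv]]
    by (simp add: case_prod_unfold)
  from dirder_has_derivative[OF this] show ?thesis by (simp add: assms dirder_eq_spacetime_deriv)
qed

lemma dirder_linear:
  assumes "bounded_linear L" and "case_prod f differentiable (at (x, t))"
  shows "dirder V (\<lambda>y s. L (f y s)) x t = L (dirder V f x t)"
  using dirder_has_derivative[OF has_derivative_field_linear[OF assms]]
  by (simp add: assms dirder_eq_spacetime_deriv)

lemma smooth_field_const: "smooth_field (\<lambda>y s. c)"
  unfolding smooth_field_def by (rule smooth_const)

lemma smooth_field_add:
  "smooth_field f \<Longrightarrow> smooth_field g \<Longrightarrow> smooth_field (\<lambda>y s. f y s + g y s)"
  unfolding smooth_field_def by (rule smooth_add)

lemma smooth_field_linear: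
  "bounded_linear L \<Longrightarrow> smooth_field f \<Longrightarrow> smooth_field (\<lambda>y s. L (f y s))"
  unfolding smooth_field_def by (rule smooth_bounded_linear)

lemma smooth_field_bilinear:
  "bounded_bilinear pr \<Longrightarrow> smooth_field f \<Longrightarrow> smooth_field g \<Longrightarrow> smooth_field (\<lambda>y s. pr (f y s) (g y s))"
  unfolding smooth_field_def by (rule smooth_bounded_bilinear)

lemma smooth_field_compose_real:
  "smooth (g :: real \<Rightarrow> real) \<Longrightarrow> smooth_field q \<Longrightarrow> smooth_field (\<lambda>y s. g (q y s))"
  unfolding smooth_field_def by (rule smooth_compose_real)

lemma smooth_field_diff:
  "smooth_field f \<Longrightarrow> smooth_field g \<Longrightarrow> smooth_field (\<lambda>y s. f y s - g y s)"
  using smooth_field_add[OF _ smooth_field_linear[OF bounded_linear_minus[OF bounded_linear_ident]]]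
  by simp

lemma smooth_field_scaleR:
  "smooth_field f \<Longrightarrow> smooth_field g \<Longrightarrow> smooth_field (\<lambda>y s. f y s *\<^sub>R g y s)"
  by (rule smooth_field_bilinear[OF bounded_bilinear_scaleR])

lemma smooth_field_nth: "smooth_field f \<Longrightarrow> smooth_field (\<lambda>y s. f y s $ j)"
  by (rule smooth_field_linear[OF bounded_linear_vec_nth])

lemma smooth_field_sum:
  assumes "finite I" and "\<And>i. i \<in> I \<Longrightarrow> smooth_field (g i)"
  shows "smooth_field (\<lambda>y s. \<Sum>i\<in>I. g i y s)"
  using assms by (induction I rule: finite_induct) (simp_all add: smooth_field_const smooth_field_add)

lemma smooth_field_vec:
  assumes "\<And>j. smooth_field (\<lambda>y s. f y s $ j)"
  shows "smooth_field (f :: real^3 \<Rightarrow> real \<Rightarrow> real^'n)"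
proof -
  have expansion: "f = (\<lambda>y s. \<Sum>j\<in>UNIV. (f y s $ j) *\<^sub>R axis j 1)"
    by (simp add: fun_eq_iff basis_expansion flip: scalar_mult_eq_scaleR)
  show ?thesis
    by (subst expansion) (intro smooth_field_sum smooth_field_scaleR assms smooth_field_const finite)
qed

lemma case_prod_spacetime_deriv:
  "case_prod (spacetime_deriv W f) = (\<lambda>z. frechet_derivative (case_prod f) (at z) W)"
  by (simp add: fun_eq_iff spacetime_deriv_def case_prod_beta)

lemma smooth_field_spacetime_deriv: "smooth_field f \<Longrightarrow> smooth_field (spacetime_deriv W f)"
  by (simp add: smooth_field_iff case_prod_spacetime_deriv smooth_frechet_derivative)

lemma pd_eq_spacetime_deriv_field: "smooth_field f \<Longrightarrow> pd j f = spacetime_deriv (axis j 1, 0) f"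
  by (intro ext) (simp add: pd_eq_spacetime_deriv smooth_field_differentiable)

lemma pt_eq_spacetime_deriv_field: "smooth_field f \<Longrightarrow> pt f = spacetime_deriv (0, 1) f"
  by (intro ext) (simp add: pt_eq_spacetime_deriv smooth_field_differentiable)

lemma smooth_field_pd: "smooth_field f \<Longrightarrow> smooth_field (pd j f)"
  by (simp add: pd_eq_spacetime_deriv_field smooth_field_spacetime_deriv)

lemma smooth_field_pt: "smooth_field f \<Longrightarrow> smooth_field (pt f)"
  by (simp add: pt_eq_spacetime_deriv_field smooth_field_spacetime_deriv)

lemma spacetime_deriv_commute:
  "smooth_field f \<Longrightarrow> spacetime_deriv V (spacetime_deriv W f) x t = spacetime_deriv W (spacetime_deriv V f) x t"
  unfolding spacetime_deriv_def[of V] spacetime_deriv_def[of W] case_prod_spacetime_deriv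
  by (rule frechet_derivative_commute) (simp add: smooth_field_iff)

lemma pd_commute: "smooth_field f \<Longrightarrow> pd i (pd j f) x t = pd j (pd i f) x t"
  by (simp add: pd_eq_spacetime_deriv_field smooth_field_spacetime_deriv spacetime_deriv_commute)

lemma pd_pt_commute: "smooth_field f \<Longrightarrow> pd j (pt f) x t = pt (pd j f) x t"
  by (simp add: pd_eq_spacetime_deriv_field pt_eq_spacetime_deriv_field smooth_field_spacetime_deriv
      spacetime_deriv_commute)

lemma smooth_field_dirder:
  "smooth_field V \<Longrightarrow> smooth_field f \<Longrightarrow> smooth_field (dirder V f)"
  unfolding dirder_def[abs_def]
  by (intro smooth_field_sum smooth_field_scaleR smooth_field_nth smooth_field_pd finite)

lemma smooth_field_grad: "smooth_field f \<Longrightarrow> smooth_field (grad f)"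
  by (rule smooth_field_vec) (simp add: grad_def smooth_field_pd)

lemma smooth_field_curl:
  assumes "smooth_field v"
  shows "smooth_field (curl v)"
proof (rule smooth_field_vec)
  fix j :: 3
  show "smooth_field (\<lambda>y s. curl v y s $ j)"
    using exhaust_3[of j]
    by (elim disjE; simp only: curl_def vector_3;
        intro smooth_field_diff smooth_field_pd smooth_field_nth assms)
qed

lemma bounded_bilinear_cross3: "bounded_bilinear cross3"
proof -
  obtain K where K: "\<forall>x y. norm (x \<times> y) \<le> K * norm x * norm y"
    using bilinear_bounded[OF bilinear_cross] by blast
  show ?thesis
  proof
    show "\<exists>K. \<forall>a b. norm (a \<times> b) \<le> norm a * norm b * K"
      using K by (metis mult.commute mult.left_commute)
  qed (simp_all add: cross_add_left cross_add_right cross_mult_left cross_mult_right)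
qed

lemma smooth_field_grad_cross_grad:
  assumes "smooth_field u" and "smooth_field \<theta>" and "smooth Q"
  shows "smooth_field (\<lambda>y s. grad (\<lambda>y' s'. Q ((curl u y' s' + 2 *\<^sub>R \<Omega>) \<bullet> grad \<theta> y' s')) y s
    \<times> grad \<theta> y s)"
  by (rule smooth_field_bilinear[OF bounded_bilinear_cross3 smooth_field_grad[OF
        smooth_field_compose_real[OF assms(3) smooth_field_bilinear[OF bounded_bilinear_inner
          smooth_field_add[OF smooth_field_curl[OF assms(1)] smooth_field_const]
          smooth_field_grad[OF assms(2)]]]]
        smooth_field_grad[OF assms(2)]])

lemma smooth_field_rotation_buoyancy:
  assumes "smooth_field u" and "smooth_field \<theta>"
  shows "smooth_field (\<lambda>y s. 2 *\<^sub>R \<Omega> \<times> u y s + (a\<^sub>0 * \<theta> y s) *\<^sub>R kvec)"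
  by (rule smooth_field_add[OF
        smooth_field_scaleR[OF smooth_field_const
          smooth_field_bilinear[OF bounded_bilinear_cross3 smooth_field_const assms(1)]]
        smooth_field_scaleR[OF smooth_field_bilinear[OF bounded_bilinear_mult smooth_field_const assms(2)]
          smooth_field_const]])

section \<open>Material derivative of the stretching vector\<close>

lemma matder_pd_commute:
  assumes u: "smooth_field u" and f: "smooth_field f"
  shows "matder u (pd j f) x t = pd j (matder u f) x t - dirder (pd j u) f x t"
proof -
  have "pd j (matder u f) x t = pd j (pt f) x t
      + (\<Sum>k\<in>UNIV. u x t $ k *\<^sub>R pd j (pd k f) x t + pd j (\<lambda>y s. u y s $ k) x t *\<^sub>R pd k f x t)"
    by (simp add: matder_def[abs_def] pd_add pd_sum pd_bilinear[OF bounded_bilinear_scaleR]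
        smooth_field_differentiable
        smooth_field_pt smooth_field_pd smooth_field_sum smooth_field_scaleR smooth_field_nth u f)
  also have "\<dots> = matder u (pd j f) x t + dirder (pd j u) f x t"
    by (simp add: matder_def dirder_def pd_pt_commute pd_commute sum.distrib algebra_simps
        pd_linear[OF bounded_linear_vec_nth] smooth_field_differentiable u f)
  finally show ?thesis by simp
qed

lemma matder_dirder_commute:
  assumes u: "smooth_field u" and V: "smooth_field V" and f: "smooth_field f"
  shows "matder u (dirder V f) x t
    = dirder V (matder u f) x t + dirder (\<lambda>y s. matder u V y s - dirder V u y s) f x t"
proof -
  have "matder u (dirder V f) x t
      = (\<Sum>j\<in>UNIV. V x t $ j *\<^sub>R matder u (pd j f) x t + matder u (\<lambda>y s. V y s $ j) x t *\<^sub>R pd j f x t)"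
    by (simp add: dirder_def[abs_def] matder_sum matder_bilinear[OF bounded_bilinear_scaleR]
        smooth_field_differentiable
        smooth_field_pd smooth_field_scaleR smooth_field_nth V f)
  also have "\<dots> = (\<Sum>j\<in>UNIV. matder u V x t $ j *\<^sub>R pd j f x t
      + V x t $ j *\<^sub>R (pd j (matder u f) x t - dirder (pd j u) f x t))"
    by (simp add: matder_pd_commute matder_linear[OF bounded_linear_vec_nth]
        smooth_field_differentiable u V f add.commute)
  also have "\<dots> = dirder V (matder u f) x t + dirder (\<lambda>y s. matder u V y s - dirder V u y s) f x t"
    by (simp add: dirder_def sum_3 algebra_simps)
  finally show ?thesis .
qed

lemma matder_dirder_frozen_in:
  assumes "smooth_field u" "smooth_field B" "smooth_field f"
    and "\<And>y s. matder u B y s = dirder B u y s"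
  shows "matder u (dirder B f) x t = dirder B (matder u f) x t"
  by (simp add: matder_dirder_commute assms dirder_def)

lemma dirder_grad:
  assumes p: "smooth_field p"
  shows "dirder V (grad p) x t = hessian p x t *v V x t"
proof -
  have "pd j (grad p) x t $ i = pd j (pd i p) x t" for i j
    using pd_linear[OF bounded_linear_vec_nth smooth_field_differentiable[OF smooth_field_grad[OF p]]]
    by (simp add: grad_def)
  then show ?thesis
    by (simp add: vec_eq_iff dirder_def hessian_def matrix_vector_mult_def
        pd_commute[OF p] mult.commute)
qed

lemma matder_stretching_vector:
  fixes u :: "real^3 \<Rightarrow> real \<Rightarrow> real^3"
  assumes u: "smooth_field u" and p: "smooth_field p" and B: "smooth_field B"
    and F: "smooth_field F"
    and momentum: "\<And>y s. matder u u y s + F y s = - grad p y s"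
    and frozen_in: "\<And>y s. matder u B y s = dirder B u y s"
  shows "matder u (dirder B u) x t = - (hessian p x t *v B x t) - dirder B F x t"
proof -
  have "matder u u = (\<lambda>y s. - grad p y s - F y s)"
    using momentum by (simp add: fun_eq_iff eq_neg_iff_add_eq_0 algebra_simps)
  then have "matder u (dirder B u) x t = dirder B (\<lambda>y s. - grad p y s - F y s) x t"
    using matder_dirder_frozen_in[OF u B u frozen_in] by simp
  also have "\<dots> = - dirder B (grad p) x t - dirder B F x t"
    by (simp add: dirder_linear[OF bounded_linear_minus[OF bounded_linear_ident]] dirder_diff
        smooth_field_differentiable smooth_field_linear[OF bounded_linear_minus[OF bounded_linear_ident]]
        smooth_field_grad p F)
  finally show ?thesis by (simp add: dirder_grad p)
qed

section \<open>The Darboux frame\<close>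

abbreviation unit_vec :: "'a::real_normed_vector \<Rightarrow> 'a" where
  "unit_vec v \<equiv> (1 / norm v) *\<^sub>R v"

lemma cross_cross_right: "a \<times> (b \<times> c) = (a \<bullet> c) *\<^sub>R b - (a \<bullet> b) *\<^sub>R c"
  by (simp add: cross3_simps forall_3)

lemma cross_cross_left: "(a \<times> b) \<times> c = (a \<bullet> c) *\<^sub>R b - (b \<bullet> c) *\<^sub>R a"
  by (simp add: cross3_simps forall_3)

lemma cross_jacobi: "(d \<times> e) \<times> x + e \<times> (d \<times> x) = d \<times> (e \<times> x)"
  by (simp add: cross3_simps forall_3)

lemma cross_orthogonal_parallel:
  assumes "e \<bullet> e = 1" and "e \<bullet> X = 0" and "e \<bullet> Y = 0"
  shows "X \<times> Y = (e \<bullet> (X \<times> Y)) *\<^sub>R e"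
proof -
  have "e \<times> (X \<times> Y) = 0"
    using assms by (simp add: cross_cross_right)
  then have "(e \<times> (X \<times> Y)) \<times> e = 0" by simp
  then show ?thesis using assms(1) by (simp add: cross_cross_left inner_commute)
qed

lemma rejection_eq_cross_cross: "e \<bullet> e = 1 \<Longrightarrow> w - (e \<bullet> w) *\<^sub>R e = (e \<times> w) \<times> e"
  by (simp add: cross_cross_left inner_commute)

lemma orthonormal_cross_frame:
  assumes "norm e = 1" and "norm c = 1" and "e \<bullet> c = 0"
  shows "norm (e \<times> c) = 1" and "e \<bullet> (e \<times> c) = 0" and "c \<bullet> (e \<times> c) = 0"
proof -
  have "(norm (e \<times> c))\<^sup>2 = 1"
    using norm_cross_dot[of e c] assms by simp
  then show "norm (e \<times> c) = 1" using norm_ge_zero[of "e \<times> c"] by (simp add: power2_eq_1_iff)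
qed (simp_all add: dot_cross_self)

lemma has_derivative_inverse_norm:
  fixes f :: "'a::real_normed_vector \<Rightarrow> 'b::real_inner"
  assumes f: "(f has_derivative f') (at z)" and nz: "f z \<noteq> 0"
  shows "((\<lambda>z. 1 / norm (f z)) has_derivative
      (\<lambda>v. - (unit_vec (f z) \<bullet> f' v) / (norm (f z))\<^sup>2)) (at z)"
proof -
  have "((\<lambda>z. norm (f z)) has_derivative (\<lambda>v. f' v \<bullet> sgn (f z))) (at z)"
    using has_derivative_compose[OF f has_derivative_norm[OF nz]] .
  from Deriv.has_derivative_inverse[OF _ this] nz
  have "((\<lambda>z. inverse (norm (f z))) has_derivative
      (\<lambda>v. - (inverse (norm (f z)) * (f' v \<bullet> sgn (f z)) * inverse (norm (f z))))) (at z)"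
    by simp
  then show ?thesis
    by (simp add: sgn_div_norm inner_commute divide_inverse power2_eq_square mult.commute mult.assoc)
qed

lemma has_derivative_normalize:
  fixes f :: "'a::real_normed_vector \<Rightarrow> 'b::real_inner"
  assumes f: "(f has_derivative f') (at z)" and nz: "f z \<noteq> 0"
  shows "((\<lambda>z. unit_vec (f z)) has_derivative
      (\<lambda>v. (1 / norm (f z)) *\<^sub>R (f' v - (unit_vec (f z) \<bullet> f' v) *\<^sub>R unit_vec (f z)))) (at z)"
  using has_derivative_scaleR[OF has_derivative_inverse_norm[OF f nz] f] nz
  by (simp add: algebra_simps power2_eq_square divide_inverse)

lemma has_derivative_field_normalize:
  assumes "case_prod f differentiable (at (x, t))" and "f x t \<noteq> 0"
  shows "(case_prod (\<lambda>y s. unit_vec (f y s)) has_derivative (\<lambda>W. (1 / norm (f x t)) *\<^sub>R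
      (spacetime_deriv W f x t - (unit_vec (f x t) \<bullet> spacetime_deriv W f x t) *\<^sub>R unit_vec (f x t))))
    (at (x, t))"
  using has_derivative_normalize[OF has_derivative_spacetime_deriv[OF assms(1)]] assms(2)
  by (simp add: case_prod_unfold)

lemma has_derivative_field_inverse_norm:
  assumes "case_prod f differentiable (at (x, t))" and "f x t \<noteq> 0"
  shows "(case_prod (\<lambda>y s. 1 / norm (f y s)) has_derivative
      (\<lambda>W. - (unit_vec (f x t) \<bullet> spacetime_deriv W f x t) / (norm (f x t))\<^sup>2)) (at (x, t))"
  using has_derivative_inverse_norm[OF has_derivative_spacetime_deriv[OF assms(1)]] assms(2)
  by (simp add: case_prod_unfold)

lemma differentiable_field_normalize:
  fixes f :: "real^3 \<Rightarrow> real \<Rightarrow> 'a::real_inner"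
  shows "case_prod f differentiable (at (x, t)) \<Longrightarrow> f x t \<noteq> 0
    \<Longrightarrow> case_prod (\<lambda>y s. unit_vec (f y s)) differentiable (at (x, t))"
  using has_derivative_field_normalize by (blast intro: differentiableI)

lemma differentiable_field_inverse_norm:
  fixes f :: "real^3 \<Rightarrow> real \<Rightarrow> 'a::real_inner"
  shows "case_prod f differentiable (at (x, t)) \<Longrightarrow> f x t \<noteq> 0
    \<Longrightarrow> case_prod (\<lambda>y s. 1 / norm (f y s)) differentiable (at (x, t))"
  using has_derivative_field_inverse_norm by (blast intro: differentiableI)

lemma matder_normalize:
  assumes "case_prod f differentiable (at (x, t))" and "f x t \<noteq> 0"
  shows "matder u (\<lambda>y s. unit_vec (f y s)) x t = (1 / norm (f x t)) *\<^sub>R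
    (matder u f x t - (unit_vec (f x t) \<bullet> matder u f x t) *\<^sub>R unit_vec (f x t))"
  using matder_has_derivative[OF has_derivative_field_normalize[OF assms]]
  by (simp add: assms matder_eq_spacetime_deriv)

lemma matder_inverse_norm:
  assumes "case_prod f differentiable (at (x, t))" and "f x t \<noteq> 0"
  shows "matder u (\<lambda>y s. 1 / norm (f y s)) x t
    = - (unit_vec (f x t) \<bullet> matder u f x t) / (norm (f x t))\<^sup>2"
  using matder_has_derivative[OF has_derivative_field_inverse_norm[OF assms]]
  by (simp add: assms matder_eq_spacetime_deriv)

lemma matder_cross_of_rotations:
  assumes "case_prod f differentiable (at (x, t))" and "case_prod g differentiable (at (x, t))"
    and "matder u f x t = D \<times> f x t" and "matder u g x t = D \<times> g x t"
  shows "matder u (\<lambda>y s. f y s \<times> g y s) x t = D \<times> (f x t \<times> g x t)"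
  using matder_bilinear[OF bounded_bilinear_cross3 assms(1,2)] cross_jacobi[of D "f x t" "g x t"]
  by (simp add: assms(3,4) add.commute)

lemma matder_unit_vec_eq_cross:
  fixes f :: "real^3 \<Rightarrow> real \<Rightarrow> real^3"
  assumes "case_prod f differentiable (at (x, t))" and "f x t \<noteq> 0"
  shows "matder u (\<lambda>y s. unit_vec (f y s)) x t
    = ((1 / norm (f x t)) *\<^sub>R (unit_vec (f x t) \<times> matder u f x t)) \<times> unit_vec (f x t)"
proof -
  have "unit_vec (f x t) \<bullet> unit_vec (f x t) = 1"
    using assms(2) by (simp add: dot_square_norm)
  from rejection_eq_cross_cross[OF this] show ?thesis
    by (simp only: matder_normalize[OF assms] cross_mult_left)
qed

lemma differentiable_field_angular_rate:
  fixes B a :: "real^3 \<Rightarrow> real \<Rightarrow> real^3"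
  assumes "case_prod B differentiable (at (x, t))" and "case_prod a differentiable (at (x, t))"
    and "B x t \<noteq> 0"
  shows "case_prod (\<lambda>y s. (1 / norm (B y s)) *\<^sub>R (unit_vec (B y s) \<times> a y s)) differentiable (at (x, t))"
  by (intro differentiable_field_bilinear[OF bounded_bilinear_scaleR]
      differentiable_field_bilinear[OF bounded_bilinear_cross3] differentiable_field_inverse_norm
      differentiable_field_normalize assms)

lemma matder_angular_rate:
  fixes u B a b \<chi>a :: "real^3 \<Rightarrow> real \<Rightarrow> real^3"
  assumes B: "case_prod B differentiable (at (x, t))" and a: "case_prod a differentiable (at (x, t))"
    and B_nz: "B x t \<noteq> 0" and B_rate: "matder u B x t = a x t" and a_rate: "matder u a x t = b x t"
    and \<chi>a_def: "\<And>y s. \<chi>a y s = (1 / norm (B y s)) *\<^sub>R (unit_vec (B y s) \<times> a y s)"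
  shows "matder u \<chi>a x t = (1 / norm (B x t)) *\<^sub>R (unit_vec (B x t) \<times> b x t)
    - (2 * (unit_vec (B x t) \<bullet> a x t) / norm (B x t)) *\<^sub>R \<chi>a x t"
proof -
  define nB e where "nB = norm (B x t)" and "e = (1 / nB) *\<^sub>R B x t"
  have nB: "nB > 0" using B_nz by (simp add: nB_def)
  have \<chi>a_fun: "\<chi>a = (\<lambda>y s. (1 / norm (B y s)) *\<^sub>R (unit_vec (B y s) \<times> a y s))"
    by (intro ext) (rule \<chi>a_def)
  have \<chi>a: "\<chi>a x t = (1 / nB) *\<^sub>R (e \<times> a x t)"
    by (simp add: \<chi>a_def e_def nB_def)
  have dB: "case_prod (\<lambda>y s. unit_vec (B y s)) differentiable (at (x, t))"
    by (rule differentiable_field_normalize[OF B B_nz])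
  have "matder u \<chi>a x t = (1 / norm (B x t)) *\<^sub>R (unit_vec (B x t) \<times> matder u a x t
      + matder u (\<lambda>y s. unit_vec (B y s)) x t \<times> a x t)
      + matder u (\<lambda>y s. 1 / norm (B y s)) x t *\<^sub>R (unit_vec (B x t) \<times> a x t)"
    unfolding \<chi>a_fun
      matder_bilinear[OF bounded_bilinear_scaleR differentiable_field_inverse_norm[OF B B_nz]
        differentiable_field_bilinear[OF bounded_bilinear_cross3 dB a]]
      matder_bilinear[OF bounded_bilinear_cross3 dB a] ..
  also have "\<dots> = (1 / nB) *\<^sub>R (e \<times> b x t + (((1 / nB) *\<^sub>R (e \<times> a x t)) \<times> e) \<times> a x t)
      - ((e \<bullet> a x t) / nB\<^sup>2) *\<^sub>R (e \<times> a x t)"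
    unfolding matder_unit_vec_eq_cross[OF B B_nz] matder_inverse_norm[OF B B_nz] B_rate a_rate
      nB_def[symmetric] e_def[symmetric]
    by (simp add: algebra_simps)
  also have "(((1 / nB) *\<^sub>R (e \<times> a x t)) \<times> e) \<times> a x t = - (e \<bullet> a x t) *\<^sub>R \<chi>a x t"
    using nB by (simp add: \<chi>a e_def cross_mult_left cross_cross_left Cross3.left_diff_distrib
        dot_square_norm inner_commute)
  also have "e \<times> a x t = nB *\<^sub>R \<chi>a x t"
    using nB by (simp add: \<chi>a)
  finally have "matder u \<chi>a x t
      = (1 / nB) *\<^sub>R (e \<times> b x t) - ((e \<bullet> a x t) / nB) *\<^sub>R \<chi>a x t - ((e \<bullet> a x t) / nB) *\<^sub>R \<chi>a x t"
    using nB by (simp add: power2_eq_square algebra_simps)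
  moreover have "2 * (e \<bullet> a x t) / nB = (e \<bullet> a x t) / nB + (e \<bullet> a x t) / nB"
    by simp
  ultimately show ?thesis
    unfolding nB_def[symmetric] e_def[symmetric] by (simp only: scaleR_add_left diff_diff_eq)
qed

lemma darboux_rotation:
  fixes u B a b \<chi>a \<chi>b Da :: "real^3 \<Rightarrow> real \<Rightarrow> real^3"
  assumes B: "case_prod B differentiable (at (x, t))" and a: "case_prod a differentiable (at (x, t))"
    and B_rate: "matder u B x t = a x t" and a_rate: "matder u a x t = b x t"
    and \<chi>a_def: "\<And>y s. \<chi>a y s = (1 / norm (B y s)) *\<^sub>R (unit_vec (B y s) \<times> a y s)"
    and \<chi>b_def: "\<chi>b x t = (1 / norm (B x t)) *\<^sub>R (unit_vec (B x t) \<times> b x t)"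
    and Da_def: "Da x t = \<chi>a x t +
      (unit_vec (B x t) \<bullet> (unit_vec (\<chi>a x t) \<times> \<chi>b x t) / norm (\<chi>a x t)) *\<^sub>R unit_vec (B x t)"
    and B_nz: "B x t \<noteq> 0" and \<chi>a_nz: "\<chi>a x t \<noteq> 0"
  shows "matder u (\<lambda>y s. unit_vec (B y s)) x t = Da x t \<times> unit_vec (B x t)"
    and "matder u (\<lambda>y s. unit_vec (\<chi>a y s)) x t = Da x t \<times> unit_vec (\<chi>a x t)"
    and "matder u (\<lambda>y s. unit_vec (B y s) \<times> unit_vec (\<chi>a y s)) x t
      = Da x t \<times> (unit_vec (B x t) \<times> unit_vec (\<chi>a x t))"
proof -
  define e X Y nX c
    where "e = unit_vec (B x t)" and "X = \<chi>a x t" and "Y = \<chi>b x t"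
      and "nX = norm X" and "c = unit_vec X"
  have \<chi>a_fun: "\<chi>a = (\<lambda>y s. (1 / norm (B y s)) *\<^sub>R (unit_vec (B y s) \<times> a y s))"
    by (intro ext) (rule \<chi>a_def)
  have d\<chi>a: "case_prod \<chi>a differentiable (at (x, t))"
    unfolding \<chi>a_fun by (rule differentiable_field_angular_rate[OF B a B_nz])
  have ee: "e \<bullet> e = 1"
    using B_nz by (simp add: e_def dot_square_norm)
  have ec: "e \<bullet> c = 0" and eY: "e \<bullet> Y = 0"
    by (simp_all add: c_def X_def Y_def \<chi>a_def \<chi>b_def e_def dot_cross_self)
  have cX: "c \<times> X = 0"
    by (simp add: c_def cross_mult_left)
  have D: "Da x t = X + (e \<bullet> (c \<times> Y) / nX) *\<^sub>R e"
    by (simp add: Da_def e_def c_def X_def Y_def nX_def)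
  have "matder u (\<lambda>y s. unit_vec (B y s)) x t = X \<times> e"
    unfolding matder_unit_vec_eq_cross[OF B B_nz] B_rate \<chi>a_def[symmetric] X_def e_def ..
  then have B_frame: "matder u (\<lambda>y s. unit_vec (B y s)) x t = Da x t \<times> e"
    by (simp add: D cross_add_left cross_mult_left)
  have "matder u (\<lambda>y s. unit_vec (\<chi>a y s)) x t = ((1 / nX) *\<^sub>R (c \<times> matder u \<chi>a x t)) \<times> c"
    unfolding matder_unit_vec_eq_cross[OF d\<chi>a \<chi>a_nz] c_def nX_def X_def ..
  also have "c \<times> matder u \<chi>a x t = c \<times> Y"
    unfolding matder_angular_rate[where u = u and B = B and a = a and b = b and \<chi>a = \<chi>a
      and x = x and t = t, OF B a B_nz B_rate a_rate \<chi>a_def] \<chi>b_def[symmetric]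
    using cX by (simp add: X_def Y_def Cross3.right_diff_distrib cross_mult_right)
  also have "c \<times> Y = (e \<bullet> (c \<times> Y)) *\<^sub>R e"
    by (rule cross_orthogonal_parallel[OF ee ec eY])
  finally have \<chi>a_frame: "matder u (\<lambda>y s. unit_vec (\<chi>a y s)) x t = Da x t \<times> c"
    using cX by (simp add: D cross_add_left cross_mult_left cross_skew[of X c])
  show "matder u (\<lambda>y s. unit_vec (B y s)) x t = Da x t \<times> unit_vec (B x t)"
    using B_frame by (simp only: e_def)
  moreover show "matder u (\<lambda>y s. unit_vec (\<chi>a y s)) x t = Da x t \<times> unit_vec (\<chi>a x t)"
    using \<chi>a_frame by (simp only: c_def X_def)
  ultimately show "matder u (\<lambda>y s. unit_vec (B y s) \<times> unit_vec (\<chi>a y s)) x t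
      = Da x t \<times> (unit_vec (B x t) \<times> unit_vec (\<chi>a x t))"
    by (rule matder_cross_of_rotations[OF differentiable_field_normalize[OF B B_nz]
          differentiable_field_normalize[OF d\<chi>a \<chi>a_nz]])
qed

theorem theorem1:
  fixes u :: "real^3 \<Rightarrow> real \<Rightarrow> real^3"
    and p \<theta> :: "real^3 \<Rightarrow> real \<Rightarrow> real"
    and \<Omega> :: "real^3" and a\<^sub>0 :: real
    and Q :: "real \<Rightarrow> real"
    and q :: "real^3 \<Rightarrow> real \<Rightarrow> real"
    and B a b \<chi>a \<chi>b Ba\<chi> :: "real^3 \<Rightarrow> real \<Rightarrow> real^3"
    and Da :: "real^3 \<Rightarrow> real \<Rightarrow> real^3"
    and x :: "real^3" and t :: real
  assumes smooth_u: "smooth_field u"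
    and smooth_p: "smooth_field p"
    and smooth_\<theta>: "smooth_field \<theta>"
    and smooth_Q: "smooth Q"
    and momentum: "\<And>y s. matder u u y s + 2 *\<^sub>R cross3 \<Omega> (u y s) + (a\<^sub>0 * \<theta> y s) *\<^sub>R kvec
                     = - grad p y s"
    and incompressible: "\<And>y s. divg u y s = 0"
    and transport: "\<And>y s. matder u \<theta> y s = 0"
    and q_def: "\<And>y s. q y s = (curl u y s + 2 *\<^sub>R \<Omega>) \<bullet> grad \<theta> y s"
    and B_def: "\<And>y s. B y s = cross3 (grad (\<lambda>y' s'. Q (q y' s')) y s) (grad \<theta> y s)"
    and B_lagr: "\<And>y s. matder u B y s = dirder B u y s"
    and B_div: "\<And>y s. divg B y s = 0"
    and a_def: "\<And>y s. a y s = dirder B u y s"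
    and b_def: "\<And>y s. b y s = matder u a y s"
    and \<chi>a_def: "\<And>y s. \<chi>a y s = (1 / norm (B y s)) *\<^sub>R
                          cross3 ((1 / norm (B y s)) *\<^sub>R B y s) (a y s)"
    and \<chi>b_def: "\<And>y s. \<chi>b y s = (1 / norm (B y s)) *\<^sub>R
                          cross3 ((1 / norm (B y s)) *\<^sub>R B y s) (b y s)"
    and Da_def: "\<And>y s. Da y s = \<chi>a y s +
           (((1 / norm (B y s)) *\<^sub>R B y s) \<bullet>
               cross3 ((1 / norm (\<chi>a y s)) *\<^sub>R \<chi>a y s) (\<chi>b y s) / norm (\<chi>a y s))
             *\<^sub>R ((1 / norm (B y s)) *\<^sub>R B y s)"
    and B_nz: "B x t \<noteq> 0"
    and \<chi>a_nz: "\<chi>a x t \<noteq> 0"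
  shows "b x t = - (hessian p x t *v B x t)
                 - dirder B (\<lambda>y s. 2 *\<^sub>R cross3 \<Omega> (u y s) + (a\<^sub>0 * \<theta> y s) *\<^sub>R kvec) x t
     \<and> (let Bh = (\<lambda>y s. (1 / norm (B y s)) *\<^sub>R B y s);
           \<chi>h = (\<lambda>y s. (1 / norm (\<chi>a y s)) *\<^sub>R \<chi>a y s);
           Ch = (\<lambda>y s. cross3 (Bh y s) (\<chi>h y s))
       in norm (Bh x t) = 1 \<and> norm (\<chi>h x t) = 1 \<and> norm (Ch x t) = 1
        \<and> Bh x t \<bullet> \<chi>h x t = 0 \<and> Bh x t \<bullet> Ch x t = 0 \<and> \<chi>h x t \<bullet> Ch x t = 0
        \<and> matder u Bh x t = cross3 (Da x t) (Bh x t)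
        \<and> matder u Ch x t = cross3 (Da x t) (Ch x t)
        \<and> matder u \<chi>h x t = cross3 (Da x t) (\<chi>h x t))"
proof -
  have B_fun: "B = (\<lambda>y s. grad (\<lambda>y' s'. Q ((curl u y' s' + 2 *\<^sub>R \<Omega>) \<bullet> grad \<theta> y' s')) y s
      \<times> grad \<theta> y s)"
    using B_def q_def by (intro ext) simp
  have smooth_B: "smooth_field B"
    unfolding B_fun by (rule smooth_field_grad_cross_grad[OF smooth_u smooth_\<theta> smooth_Q])
  have a_fun: "a = dirder B u"
    by (intro ext) (rule a_def)
  have smooth_a: "smooth_field a"
    unfolding a_fun by (rule smooth_field_dirder[OF smooth_B smooth_u])
  have b_eq: "b x t = - (hessian p x t *v B x t)
      - dirder B (\<lambda>y s. 2 *\<^sub>R \<Omega> \<times> u y s + (a\<^sub>0 * \<theta> y s) *\<^sub>R kvec) x t"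
    unfolding b_def a_fun
    by (rule matder_stretching_vector[OF smooth_u smooth_p smooth_B
          smooth_field_rotation_buoyancy[OF smooth_u smooth_\<theta>] _ B_lagr])
      (simp add: momentum flip: add.assoc)
  note frame = darboux_rotation[where u = u and B = B and a = a and b = b and \<chi>a = \<chi>a
      and \<chi>b = \<chi>b and Da = Da and x = x and t = t,
      OF smooth_field_differentiable[OF smooth_B] smooth_field_differentiable[OF smooth_a]
      B_lagr[unfolded a_def[symmetric]] b_def[symmetric] \<chi>a_def \<chi>b_def Da_def B_nz \<chi>a_nz]
  have unit_B: "norm (unit_vec (B x t)) = 1" and unit_\<chi>a: "norm (unit_vec (\<chi>a x t)) = 1"
    using B_nz \<chi>a_nz by simp_all
  have orthogonal: "unit_vec (B x t) \<bullet> unit_vec (\<chi>a x t) = 0"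
    by (simp add: \<chi>a_def dot_cross_self)
  show ?thesis
    unfolding Let_def
    by (intro conjI b_eq unit_B unit_\<chi>a orthogonal frame
        orthonormal_cross_frame[OF unit_B unit_\<chi>a orthogonal])
qed

end
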